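(* Let $t$ be even, $c\ge 0$ an integer, and $S\subseteq[n]$ with $|S|\geq n/k^c$. Let $\mathcal B$ be the following system of polynomial constraints in scalar variables $z_r^{i,j}$ ($r\in[n]$, $i,j\in[k]$) and vector variables $v_r\in\mathbb R^d$ ($r\in[n]$): (i) $z_r^{i,j}=(z_r^{i,j})^2$ for all $r,i,j$; (ii) $\sum_{i=1}^k\sum_{j=1}^k z_r^{i,j}=1$ for all $r$; (iii) $z_r^{i,j}z_s^{i,j}(v_r-v_s)=0$ for all $i,j\in[k]$, $r,s\in[n]$; (iv) for all $u\in\mathbb R^d$: $\frac1n\sum_{r=1}^n\langle v_r,u\rangle^t\leq 2\cdot(4t)^{t/2}\|u\|_2^t$. Then for all $i,j\in[k]$, $$\mathcal B\vdash_{O(t)}\ \frac{1}{|S|}\sum_{r\in S}z_r^{i,j}\|v_r\|_2^t\leq 2\cdot k^c\cdot(4t)^{t/2}.$$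
   Context: $\mathcal B\vdash_s p\geq 0$ means there is a degree-$s$ sum-of-squares proof: $p$ is a sum of terms $b\cdot\prod q$ with $b$ a sum of squares of polynomials and $q$ ranging over (products of) the constraints, each term of degree at most $s$ (an equality constraint $q=0$ may be used with either sign and multiplied by arbitrary polynomials). The universally quantified constraint (iv) is understood as being certified by a sum-of-squares proof in the variables $u$, so that it may be used in sum-of-squares proofs with $u$ instantiated as any vector whose entries are polynomials of degree at most $2$ in the variables $z_r^{i,j},v_r$. *)

theory Defs
  imports Complex_Main "HOL-Library.Poly_Mapping"
begin

text \<open>Variables of the constraint system: Zv r i j is the scalar z_r^{i,j};
  Vv r a is the a-th coordinate of the vector variable v_r (all indices 0-based).\<close>
datatype pvar = Zv nat nat nat | Vv nat nat

type_synonym mpoly = "(pvar \<Rightarrow>\<^sub>0 nat) \<Rightarrow>\<^sub>0 real"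

definition PVar :: "pvar \<Rightarrow> mpoly" where
  "PVar x = Poly_Mapping.single (Poly_Mapping.single x 1) 1"

definition PConst :: "real \<Rightarrow> mpoly" where
  "PConst c = Poly_Mapping.single 0 c"

definition mdeg :: "(pvar \<Rightarrow>\<^sub>0 nat) \<Rightarrow> nat" where
  "mdeg m = (\<Sum>x\<in>Poly_Mapping.keys m. Poly_Mapping.lookup m x)"

text \<open>Total degree (0 for the zero polynomial).\<close>
definition tdeg :: "mpoly \<Rightarrow> nat" where
  "tdeg p = Max (insert 0 (mdeg ` Poly_Mapping.keys p))"

text \<open>Degree-s sum-of-squares derivability of p \<ge> 0 from inequality axioms Ineq (q \<ge> 0)
  and equality axioms Eq (e = 0):
  p = sum of terms (sum of squares) * (product of inequality axioms)
      + sum of (arbitrary polynomial) * (equality axiom),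
  each term of degree at most s.\<close>
definition sos_derivable :: "mpoly set \<Rightarrow> mpoly set \<Rightarrow> nat \<Rightarrow> mpoly \<Rightarrow> bool" where
  "sos_derivable Ineq Eq s p \<longleftrightarrow>
     (\<exists>(ts :: (mpoly list \<times> mpoly list) list) (es :: (mpoly \<times> mpoly) list).
        (\<forall>(gs, qs) \<in> set ts. set qs \<subseteq> Ineq \<and>
            (\<forall>g \<in> set gs. 2 * tdeg g + sum_list (map tdeg qs) \<le> s)) \<and>
        (\<forall>(h, e) \<in> set es. e \<in> Eq \<and> tdeg h + tdeg e \<le> s) \<and>
        p = (\<Sum>(gs, qs) \<leftarrow> ts. (\<Sum>g \<leftarrow> gs. g ^ 2) * prod_list qs)
            + (\<Sum>(h, e) \<leftarrow> es. h * e))"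

abbreviation Zp :: "nat \<Rightarrow> nat \<Rightarrow> nat \<Rightarrow> mpoly" where
  "Zp r i j \<equiv> PVar (Zv r i j)"

abbreviation Vp :: "nat \<Rightarrow> nat \<Rightarrow> mpoly" where
  "Vp r a \<equiv> PVar (Vv r a)"

text \<open>Equality constraints (i), (ii), (iii) (the vector equation (iii) coordinatewise).\<close>
definition B_eq :: "nat \<Rightarrow> nat \<Rightarrow> nat \<Rightarrow> mpoly set" where
  "B_eq n k d =
     {Zp r i j - Zp r i j ^ 2 | r i j. r < n \<and> i < k \<and> j < k}
   \<union> {(\<Sum>i<k. \<Sum>j<k. Zp r i j) - 1 | r. r < n}
   \<union> {Zp r i j * Zp s i j * (Vp r a - Vp s a) | i j r s a.
         i < k \<and> j < k \<and> r < n \<and> s < n \<and> a < d}"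

text \<open>Inequality constraint (iv), instantiated at every vector u whose entries are
  polynomials of degree at most 2 (t even, so ||u||^t = (sum u_a^2)^(t/2)).\<close>
definition B_ineq :: "nat \<Rightarrow> nat \<Rightarrow> nat \<Rightarrow> mpoly set" where
  "B_ineq n d t =
     {PConst (2 * (4 * real t) ^ (t div 2)) * (\<Sum>a<d. U a ^ 2) ^ (t div 2)
        - PConst (1 / real n) * (\<Sum>r<n. (\<Sum>a<d. Vp r a * U a) ^ t) | U.
        \<forall>a<d. tdeg (U a) \<le> 2}"

end

theory Submission
  imports Defs
begin

(* Write w_r = z_r^{i,j} and T = sum over r in S of w_r |v_r|^t.  For s in S, multiply axiom (iv)
   at u = v_s by w_s^2.  Modulo the equality constraints, w_r w_s <v_r, v_s>^t equals
   w_r w_s |v_r|^t |v_s|^t (constraint (iii) identifies v_r and v_s wherever w_r w_s = 1),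
   and everything else in the expansion of w_s^2 <v_r, v_s>^t is a square; summing over s yields
   the quadratic bound (1/n) T^2 <= 2 (4t)^(t/2) T in degree 2t + 4.  Completing the square turns
   it into the linear bound T / |S| <= (n / |S|) 2 (4t)^(t/2) <= k^c 2 (4t)^(t/2). *)

lemma PConst_0 [simp]: "PConst 0 = 0"
  and PConst_1 [simp]: "PConst 1 = 1"
  and PConst_add: "PConst (a + b) = PConst a + PConst b"
  and PConst_uminus: "PConst (- a) = - PConst a"
  and PConst_diff: "PConst (a - b) = PConst a - PConst b"
  and PConst_mult: "PConst (a * b) = PConst a * PConst b"
  unfolding PConst_def by (simp_all add: single_add single_uminus single_diff mult_single)

lemma PConst_power: "PConst (a ^ n) = PConst a ^ n"
  by (induction n) (simp_all add: PConst_mult)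

lemma PConst_numeral: "PConst (numeral w) = numeral w"
  unfolding PConst_def by simp

lemma tdeg_le_iff: "tdeg p \<le> s \<longleftrightarrow> (\<forall>m\<in>Poly_Mapping.keys p. mdeg m \<le> s)"
  unfolding tdeg_def by (simp add: Max_le_iff)

lemma mdeg_eq_sum_over_superset:
  "finite K \<Longrightarrow> Poly_Mapping.keys m \<subseteq> K \<Longrightarrow> mdeg m = (\<Sum>x\<in>K. Poly_Mapping.lookup m x)"
  unfolding mdeg_def by (rule sum.mono_neutral_left) (auto simp: in_keys_iff)

lemma mdeg_add: "mdeg (a + b) = mdeg a + mdeg b"
proof -
  let ?K = "Poly_Mapping.keys a \<union> Poly_Mapping.keys b"
  have "mdeg (a + b) = (\<Sum>x\<in>?K. Poly_Mapping.lookup (a + b) x)"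
    by (rule mdeg_eq_sum_over_superset) (simp_all add: keys_add)
  also have "\<dots> = (\<Sum>x\<in>?K. Poly_Mapping.lookup a x) + (\<Sum>x\<in>?K. Poly_Mapping.lookup b x)"
    by (simp only: lookup_add sum.distrib)
  also have "\<dots> = mdeg a + mdeg b"
    using mdeg_eq_sum_over_superset[of ?K a] mdeg_eq_sum_over_superset[of ?K b] by simp
  finally show ?thesis .
qed

lemma mdeg_zero [simp]: "mdeg 0 = 0"
  by (simp add: mdeg_def)

lemma tdeg_mult_le: "tdeg p \<le> a \<Longrightarrow> tdeg q \<le> b \<Longrightarrow> tdeg (p * q) \<le> a + b"
  unfolding tdeg_le_iff using keys_mult[of p q] by (force simp: mdeg_add intro: add_mono)

lemma tdeg_add_le: "tdeg p \<le> a \<Longrightarrow> tdeg q \<le> b \<Longrightarrow> tdeg (p + q) \<le> max a b"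
  unfolding tdeg_le_iff using keys_add[of p q] by fastforce

lemma tdeg_uminus [simp]: "tdeg (- p) = tdeg p"
  unfolding tdeg_def by simp

lemma tdeg_diff_le: "tdeg p \<le> a \<Longrightarrow> tdeg q \<le> b \<Longrightarrow> tdeg (p - q) \<le> max a b"
  using tdeg_add_le[of p a "- q" b] by simp

lemma tdeg_power_le: "tdeg p \<le> a \<Longrightarrow> tdeg (p ^ n) \<le> n * a"
proof (induction n)
  case (Suc n)
  show ?case using tdeg_mult_le[OF Suc.prems Suc.IH[OF Suc.prems]] by simp
qed (simp add: tdeg_def)

lemma tdeg_sum_le: "(\<And>x. x \<in> A \<Longrightarrow> tdeg (f x) \<le> a) \<Longrightarrow> tdeg (sum f A) \<le> a"
proof (induction A rule: infinite_finite_induct)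
  case (insert x F)
  then show ?case using tdeg_add_le[of "f x" a "sum f F" a] by simp
qed (simp_all add: tdeg_def)

lemma tdeg_PConst [simp]: "tdeg (PConst c) = 0"
  unfolding tdeg_def PConst_def by auto

lemma tdeg_one [simp]: "tdeg (1 :: mpoly) = 0"
  unfolding tdeg_def by auto

lemma tdeg_PVar_le: "tdeg (PVar x) \<le> 1"
  unfolding tdeg_le_iff PVar_def by (auto simp: mdeg_def)

lemma tdeg_PConst_le: "tdeg (PConst c) \<le> 0"
  and tdeg_one_le: "tdeg (1 :: mpoly) \<le> 0"
  by simp_all

text \<open>Applied as \<open>rule order.trans, (rule tdeg_le_intros)+\<close>, these rules compute a degree
  bound by recursion on the polynomial, leaving only an arithmetic side goal.\<close>
lemmas tdeg_le_intros =
  tdeg_mult_le tdeg_add_le tdeg_diff_le tdeg_power_le tdeg_sum_le tdeg_PConst_le tdeg_one_le tdeg_PVar_le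

inductive deg_ideal :: "mpoly set \<Rightarrow> nat \<Rightarrow> mpoly \<Rightarrow> bool" for Eq s where
  deg_ideal_zero: "deg_ideal Eq s 0"
| deg_ideal_generator: "e \<in> Eq \<Longrightarrow> tdeg h + tdeg e \<le> s \<Longrightarrow> deg_ideal Eq s (h * e)"
| deg_ideal_add: "deg_ideal Eq s p \<Longrightarrow> deg_ideal Eq s q \<Longrightarrow> deg_ideal Eq s (p + q)"

lemma deg_ideal_mult: "deg_ideal Eq s p \<Longrightarrow> tdeg q \<le> a \<Longrightarrow> deg_ideal Eq (s + a) (q * p)"
proof (induction rule: deg_ideal.induct)
  case deg_ideal_zero
  show ?case by (simp add: deg_ideal.deg_ideal_zero)
next
  case (deg_ideal_generator e h)
  have "tdeg (q * h) + tdeg e \<le> s + a"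
    using tdeg_mult_le[OF deg_ideal_generator.prems order.refl, of h] deg_ideal_generator.hyps(2) by simp
  then have "deg_ideal Eq (s + a) ((q * h) * e)"
    by (rule deg_ideal.deg_ideal_generator[OF deg_ideal_generator.hyps(1)])
  then show ?case by (simp add: mult.assoc)
next
  case (deg_ideal_add p p')
  then show ?case by (simp add: distrib_left deg_ideal.deg_ideal_add)
qed

lemma deg_ideal_mono: "deg_ideal Eq s p \<Longrightarrow> s \<le> s' \<Longrightarrow> deg_ideal Eq s' p"
  by (induction rule: deg_ideal.induct) (auto intro: deg_ideal.intros)

lemma deg_ideal_mult_le: "deg_ideal Eq s p \<Longrightarrow> tdeg q \<le> a \<Longrightarrow> s + a \<le> s' \<Longrightarrow> deg_ideal Eq s' (q * p)"
  by (rule deg_ideal_mono[OF deg_ideal_mult])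

lemma deg_ideal_uminus: "deg_ideal Eq s p \<Longrightarrow> deg_ideal Eq s (- p)"
  using deg_ideal_mult[of Eq s p "- 1" 0] by simp

lemma deg_ideal_diff: "deg_ideal Eq s p \<Longrightarrow> deg_ideal Eq s q \<Longrightarrow> deg_ideal Eq s (p - q)"
  using deg_ideal_add[of Eq s p "- q"] deg_ideal_uminus by simp

lemma deg_ideal_sum: "(\<And>x. x \<in> A \<Longrightarrow> deg_ideal Eq s (f x)) \<Longrightarrow> deg_ideal Eq s (sum f A)"
  by (induction A rule: infinite_finite_induct) (auto intro: deg_ideal.intros)

lemma deg_ideal_power_congruence:
  assumes "deg_ideal Eq s (e * X - e * Y)" "tdeg X \<le> a" "tdeg Y \<le> a"
  shows "deg_ideal Eq (s + m * a) (e * X ^ m - e * Y ^ m)"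
proof (induction m)
  case 0
  show ?case by (simp add: deg_ideal_zero)
next
  case (Suc m)
  have "e * X ^ Suc m - e * Y ^ Suc m = X * (e * X ^ m - e * Y ^ m) + Y ^ m * (e * X - e * Y)"
    by (simp add: algebra_simps)
  also have "deg_ideal Eq (s + Suc m * a) \<dots>"
    by (intro deg_ideal_add deg_ideal_mult_le[OF Suc.IH assms(2)]
        deg_ideal_mult_le[OF assms(1) tdeg_power_le[OF assms(3)]]) simp_all
  finally show ?case .
qed

lemma deg_ideal_sum_list_repr:
  assumes "deg_ideal Eq s p"
  shows "\<exists>es. (\<forall>(h, e) \<in> set es. e \<in> Eq \<and> tdeg h + tdeg e \<le> s) \<and> p = (\<Sum>(h, e) \<leftarrow> es. h * e)"
  using assms
proof (induction rule: deg_ideal.induct)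
  case deg_ideal_zero
  show ?case by (rule exI[of _ "[]"]) simp
next
  case (deg_ideal_generator e h)
  then show ?case by (intro exI[of _ "[(h, e)]"]) simp
next
  case (deg_ideal_add p q)
  then obtain es1 es2 where "\<forall>(h, e) \<in> set es1. e \<in> Eq \<and> tdeg h + tdeg e \<le> s" "p = (\<Sum>(h, e) \<leftarrow> es1. h * e)"
    and "\<forall>(h, e) \<in> set es2. e \<in> Eq \<and> tdeg h + tdeg e \<le> s" "q = (\<Sum>(h, e) \<leftarrow> es2. h * e)"
    by blast
  then show ?case by (intro exI[of _ "es1 @ es2"]) auto
qed

text \<open>Certificates of \<open>sos_derivable\<close> as an inductive predicate, so that closure properties
  follow by rule induction instead of list manipulation.\<close>
inductive sos_proof :: "mpoly set \<Rightarrow> mpoly set \<Rightarrow> nat \<Rightarrow> mpoly \<Rightarrow> bool" for Ineq Eq s where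
  sos_proof_square_mult:
    "set qs \<subseteq> Ineq \<Longrightarrow> 2 * tdeg g + sum_list (map tdeg qs) \<le> s \<Longrightarrow> sos_proof Ineq Eq s (g\<^sup>2 * prod_list qs)"
| sos_proof_ideal: "deg_ideal Eq s p \<Longrightarrow> sos_proof Ineq Eq s p"
| sos_proof_add: "sos_proof Ineq Eq s p \<Longrightarrow> sos_proof Ineq Eq s q \<Longrightarrow> sos_proof Ineq Eq s (p + q)"

lemma sos_derivable_if_sos_proof:
  assumes "sos_proof Ineq Eq s p"
  shows "sos_derivable Ineq Eq s p"
  using assms unfolding sos_derivable_def
proof (induction rule: sos_proof.induct)
  case (sos_proof_square_mult qs g)
  then show ?case by (intro exI[of _ "[([g], qs)]"] exI[of _ "[]"]) simp
next
  case (sos_proof_ideal p)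
  then obtain es where "\<forall>(h, e) \<in> set es. e \<in> Eq \<and> tdeg h + tdeg e \<le> s" "p = (\<Sum>(h, e) \<leftarrow> es. h * e)"
    using deg_ideal_sum_list_repr by blast
  then show ?case by (intro exI[of _ "[]"] exI[of _ es]) simp
next
  case (sos_proof_add p q)
  then obtain ts1 es1 ts2 es2 where
    "\<forall>(gs, qs) \<in> set ts1. set qs \<subseteq> Ineq \<and> (\<forall>g \<in> set gs. 2 * tdeg g + sum_list (map tdeg qs) \<le> s)"
    "\<forall>(h, e) \<in> set es1. e \<in> Eq \<and> tdeg h + tdeg e \<le> s"
    "p = (\<Sum>(gs, qs) \<leftarrow> ts1. (\<Sum>g \<leftarrow> gs. g ^ 2) * prod_list qs) + (\<Sum>(h, e) \<leftarrow> es1. h * e)"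
    "\<forall>(gs, qs) \<in> set ts2. set qs \<subseteq> Ineq \<and> (\<forall>g \<in> set gs. 2 * tdeg g + sum_list (map tdeg qs) \<le> s)"
    "\<forall>(h, e) \<in> set es2. e \<in> Eq \<and> tdeg h + tdeg e \<le> s"
    "q = (\<Sum>(gs, qs) \<leftarrow> ts2. (\<Sum>g \<leftarrow> gs. g ^ 2) * prod_list qs) + (\<Sum>(h, e) \<leftarrow> es2. h * e)"
    by blast
  then show ?case by (intro exI[of _ "ts1 @ ts2"] exI[of _ "es1 @ es2"]) (auto simp: algebra_simps)
qed

lemma sos_proof_square: "2 * tdeg g \<le> s \<Longrightarrow> sos_proof Ineq Eq s (g\<^sup>2)"
  using sos_proof_square_mult[of "[]"] by simp

lemma sos_proof_square_mult_axiom: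
  "q \<in> Ineq \<Longrightarrow> 2 * tdeg g + tdeg q \<le> s \<Longrightarrow> sos_proof Ineq Eq s (g\<^sup>2 * q)"
  using sos_proof_square_mult[of "[q]"] by simp

lemma sos_proof_sum: "(\<And>x. x \<in> A \<Longrightarrow> sos_proof Ineq Eq s (f x)) \<Longrightarrow> sos_proof Ineq Eq s (sum f A)"
  by (induction A rule: infinite_finite_induct) (auto intro: sos_proof.intros deg_ideal_zero)

lemma sos_proof_mono: "sos_proof Ineq Eq s p \<Longrightarrow> s \<le> s' \<Longrightarrow> sos_proof Ineq Eq s' p"
  by (induction rule: sos_proof.induct) (auto intro: sos_proof.intros deg_ideal_mono)

lemma sos_proof_scale: "sos_proof Ineq Eq s p \<Longrightarrow> 0 \<le> c \<Longrightarrow> sos_proof Ineq Eq s (PConst c * p)"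
proof (induction rule: sos_proof.induct)
  case (sos_proof_square_mult qs g)
  have "tdeg (PConst (sqrt c) * g) \<le> tdeg g"
    using tdeg_mult_le[OF tdeg_PConst_le order.refl] by simp
  then have "sos_proof Ineq Eq s ((PConst (sqrt c) * g)\<^sup>2 * prod_list qs)"
    using sos_proof_square_mult by (intro sos_proof.sos_proof_square_mult) auto
  moreover have "(PConst (sqrt c) * g)\<^sup>2 = PConst c * g\<^sup>2"
    using sos_proof_square_mult.prems by (simp add: power_mult_distrib flip: PConst_power)
  ultimately show ?case by (simp add: mult.assoc)
next
  case (sos_proof_ideal p)
  then show ?case
    using deg_ideal_mult[OF sos_proof_ideal.hyps tdeg_PConst_le] by (simp add: sos_proof.sos_proof_ideal)
next
  case (sos_proof_add p q)
  then show ?case by (simp add: distrib_left sos_proof.sos_proof_add)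
qed

lemma sos_proof_PConst: "0 \<le> c \<Longrightarrow> sos_proof Ineq Eq s (PConst c)"
  using sos_proof_scale[OF sos_proof_square[of 1 s]] by simp

text \<open>From \<open>\<alpha> T - \<beta> T\<^sup>2 \<ge> 0\<close> one gets \<open>\<gamma> T \<le> C := \<gamma> \<alpha> / \<beta>\<close>, certified by
  \<open>K - \<gamma> T = (K - C) + (\<gamma> T - C)\<^sup>2 / C + (\<gamma> / \<alpha>) (\<alpha> T - \<beta> T\<^sup>2)\<close>.\<close>
lemma sos_proof_linear_bound_from_quadratic:
  assumes quadratic: "sos_proof Ineq Eq s (PConst \<alpha> * T - PConst \<beta> * T\<^sup>2)"
    and "0 < \<alpha>" "0 < \<beta>" "0 < \<gamma>" "\<gamma> * \<alpha> / \<beta> \<le> K" "2 * tdeg T \<le> s"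
  shows "sos_proof Ineq Eq s (PConst K - PConst \<gamma> * T)"
proof -
  define C where "C = \<gamma> * \<alpha> / \<beta>"
  have C: "0 < C" "C \<le> K"
    using assms(2-5) unfolding C_def by simp_all
  have expand: "PConst k\<^sub>0 + PConst a * (PConst b * T - PConst g)\<^sup>2 + PConst e * (PConst f * T - PConst h * T\<^sup>2)
      = PConst (k\<^sub>0 + a * g\<^sup>2) + PConst (e * f - 2 * a * b * g) * T + PConst (a * b\<^sup>2 - e * h) * T\<^sup>2"
    for k\<^sub>0 a b g e f h
    by (simp add: PConst_add PConst_diff PConst_mult PConst_power PConst_numeral algebra_simps power2_eq_square)
  have "PConst (K - C) + PConst (1 / C) * (PConst \<gamma> * T - PConst C)\<^sup>2
          + PConst (\<gamma> / \<alpha>) * (PConst \<alpha> * T - PConst \<beta> * T\<^sup>2)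
      = PConst (K - C + 1 / C * C\<^sup>2) + PConst (\<gamma> / \<alpha> * \<alpha> - 2 * (1 / C) * \<gamma> * C) * T
          + PConst (1 / C * \<gamma>\<^sup>2 - \<gamma> / \<alpha> * \<beta>) * T\<^sup>2"
    by (rule expand)
  also have "\<dots> = PConst K - PConst \<gamma> * T"
    using assms(2,3) C(1) unfolding C_def by (simp add: PConst_uminus field_simps power2_eq_square)
  finally have certificate: "PConst K - PConst \<gamma> * T
      = PConst (K - C) + PConst (1 / C) * (PConst \<gamma> * T - PConst C)\<^sup>2
          + PConst (\<gamma> / \<alpha>) * (PConst \<alpha> * T - PConst \<beta> * T\<^sup>2)" ..
  have "tdeg (PConst \<gamma> * T - PConst C) \<le> tdeg T"
    by (rule order.trans, (rule tdeg_le_intros order.refl)+) simp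
  then have "2 * tdeg (PConst \<gamma> * T - PConst C) \<le> s"
    using assms(6) by simp
  then show ?thesis
    unfolding certificate using C assms(2,4)
    by (intro sos_proof_add sos_proof_PConst sos_proof_scale[OF sos_proof_square] sos_proof_scale[OF quadratic]) simp_all
qed

abbreviation sqnorm_poly :: "nat \<Rightarrow> nat \<Rightarrow> mpoly" where
  "sqnorm_poly d r \<equiv> \<Sum>a<d. Vp r a ^ 2"

abbreviation inner_poly :: "nat \<Rightarrow> nat \<Rightarrow> nat \<Rightarrow> mpoly" where
  "inner_poly d r s \<equiv> \<Sum>a<d. Vp r a * Vp s a"

context
  fixes n k d t m i j :: nat
  assumes ij: "i < k" "j < k" and t_eq: "t = 2 * m"
begin

lemma deg_ideal_idempotency_multiple:
  assumes "r < n" "tdeg h + 2 \<le> s"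
  shows "deg_ideal (B_eq n k d) s (h * (Zp r i j - Zp r i j ^ 2))"
proof (rule deg_ideal_generator)
  show "Zp r i j - Zp r i j ^ 2 \<in> B_eq n k d"
    using assms(1) ij unfolding B_eq_def by blast
  have "tdeg (Zp r i j - Zp r i j ^ 2) \<le> 2"
    by (rule order.trans, (rule tdeg_le_intros)+) simp
  then show "tdeg h + tdeg (Zp r i j - Zp r i j ^ 2) \<le> s"
    using assms(2) by simp
qed

lemma deg_ideal_inner_eq_sqnorm:
  assumes "r < n" "s < n"
  shows "deg_ideal (B_eq n k d) 4
    (Zp r i j * Zp s i j * inner_poly d r s - Zp r i j * Zp s i j * sqnorm_poly d s)"
proof -
  have "Zp r i j * Zp s i j * inner_poly d r s - Zp r i j * Zp s i j * sqnorm_poly d s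
      = (\<Sum>a<d. Vp s a * (Zp r i j * Zp s i j * (Vp r a - Vp s a)))"
    by (simp add: sum_distrib_left sum_subtractf[symmetric] algebra_simps power2_eq_square)
  also have "deg_ideal (B_eq n k d) 4 \<dots>"
  proof (intro deg_ideal_sum deg_ideal_generator)
    fix a assume "a \<in> {..<d}"
    then show "Zp r i j * Zp s i j * (Vp r a - Vp s a) \<in> B_eq n k d"
      using assms ij unfolding B_eq_def by blast
    show "tdeg (Vp s a) + tdeg (Zp r i j * Zp s i j * (Vp r a - Vp s a)) \<le> 4"
      by (rule order.trans[OF add_mono], (rule tdeg_le_intros)+) simp
  qed
  finally show ?thesis .
qed

lemma deg_ideal_inner_power_eq_sqnorm_powers:
  assumes "r < n" "s < n"
  shows "deg_ideal (B_eq n k d) (2 * t + 4)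
    (Zp r i j * Zp s i j * inner_poly d r s ^ t
      - Zp r i j * Zp s i j * (sqnorm_poly d r ^ m * sqnorm_poly d s ^ m))"
proof -
  let ?e = "Zp r i j * Zp s i j" and ?P = "inner_poly d r s"
  let ?Nr = "sqnorm_poly d r" and ?Ns = "sqnorm_poly d s"
  have tdeg_P: "tdeg (inner_poly d x y) \<le> 2" and tdeg_N: "tdeg (sqnorm_poly d x) \<le> 2" for x y
    by (rule order.trans, (rule tdeg_le_intros)+, simp)+
  have right: "deg_ideal (B_eq n k d) (4 + m * 2) (?e * ?P ^ m - ?e * ?Ns ^ m)"
    by (rule deg_ideal_power_congruence[OF deg_ideal_inner_eq_sqnorm[OF assms] tdeg_P tdeg_N])
  have swap: "Zp s i j * Zp r i j = ?e" "inner_poly d s r = ?P"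
    by (simp_all add: ac_simps)
  have left: "deg_ideal (B_eq n k d) (4 + m * 2) (?e * ?P ^ m - ?e * ?Nr ^ m)"
    using deg_ideal_power_congruence[OF deg_ideal_inner_eq_sqnorm[OF assms(2,1)] tdeg_P tdeg_N, of m]
    unfolding swap .
  have "?e * ?P ^ t - ?e * (?Nr ^ m * ?Ns ^ m)
      = ?P ^ m * (?e * ?P ^ m - ?e * ?Ns ^ m) + ?Ns ^ m * (?e * ?P ^ m - ?e * ?Nr ^ m)"
    unfolding t_eq mult_2 power_add by (simp add: algebra_simps)
  also have "deg_ideal (B_eq n k d) (2 * t + 4) \<dots>"
    by (intro deg_ideal_add deg_ideal_mult_le[OF right tdeg_power_le[OF tdeg_P]]
        deg_ideal_mult_le[OF left tdeg_power_le[OF tdeg_N]]) (simp_all add: t_eq)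
  finally show ?thesis .
qed

lemma sos_proof_pair:
  assumes "r < n" "s < n"
  shows "sos_proof (B_ineq n d t) (B_eq n k d) (2 * t + 4)
    (Zp s i j ^ 2 * inner_poly d r s ^ t
      - Zp r i j * Zp s i j * (sqnorm_poly d r ^ m * sqnorm_poly d s ^ m))"
proof -
  let ?P = "inner_poly d r s" and ?W = "Zp r i j * Zp s i j * (sqnorm_poly d r ^ m * sqnorm_poly d s ^ m)"
  \<comment> \<open>\<open>w\<^sub>s\<^sup>2 = ((1 - w\<^sub>r) w\<^sub>s)\<^sup>2 + (2 w\<^sub>r - w\<^sub>r\<^sup>2) w\<^sub>s\<^sup>2\<close>, and by idempotency the last term is \<open>w\<^sub>r w\<^sub>s\<close>\<close>
  have "Zp s i j ^ 2 * ?P ^ t - ?W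
      = ((1 - Zp r i j) * Zp s i j * ?P ^ m)\<^sup>2
        + ((Zp s i j ^ 2 * ?P ^ t) * (Zp r i j - Zp r i j ^ 2)
          - (Zp r i j * ?P ^ t) * (Zp s i j - Zp s i j ^ 2)
          + (Zp r i j * Zp s i j * ?P ^ t - ?W))"
    unfolding t_eq mult_2 power_add by (simp add: algebra_simps power2_eq_square)
  also have "sos_proof (B_ineq n d t) (B_eq n k d) (2 * t + 4) \<dots>"
  proof (intro sos_proof_add sos_proof_square sos_proof_ideal deg_ideal_add)
    have "tdeg ((1 - Zp r i j) * Zp s i j * ?P ^ m) \<le> t + 2"
      by (rule order.trans, (rule tdeg_le_intros)+) (simp add: t_eq)
    then show "2 * tdeg ((1 - Zp r i j) * Zp s i j * ?P ^ m) \<le> 2 * t + 4"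
      by simp
    have "tdeg (Zp s i j ^ 2 * ?P ^ t) \<le> 2 * t + 2" "tdeg (Zp r i j * ?P ^ t) \<le> 2 * t + 2"
      by (rule order.trans, (rule tdeg_le_intros)+, simp)+
    then show "deg_ideal (B_eq n k d) (2 * t + 4)
        ((Zp s i j ^ 2 * ?P ^ t) * (Zp r i j - Zp r i j ^ 2) - (Zp r i j * ?P ^ t) * (Zp s i j - Zp s i j ^ 2))"
      by (intro deg_ideal_diff deg_ideal_idempotency_multiple assms) simp_all
    show "deg_ideal (B_eq n k d) (2 * t + 4) (Zp r i j * Zp s i j * ?P ^ t - ?W)"
      by (rule deg_ideal_inner_power_eq_sqnorm_powers[OF assms])
  qed
  finally show ?thesis .
qed

lemma B_ineq_instance_at_Vp:
  "PConst (2 * (4 * real t) ^ m) * sqnorm_poly d s ^ m - PConst (1 / real n) * (\<Sum>r<n. inner_poly d r s ^ t)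
    \<in> B_ineq n d t"
  unfolding B_ineq_def
  by (rule CollectI, rule exI[of _ "\<lambda>a. Vp s a"]) (auto simp: t_eq intro: order.trans[OF tdeg_PVar_le])

lemma sos_proof_row:
  assumes S: "S \<subseteq> {..<n}" and s: "s \<in> S"
  shows "sos_proof (B_ineq n d t) (B_eq n k d) (2 * t + 4)
    (PConst (2 * (4 * real t) ^ m) * (Zp s i j * sqnorm_poly d s ^ m)
      - PConst (1 / real n) * ((\<Sum>r\<in>S. Zp r i j * sqnorm_poly d r ^ m) * (Zp s i j * sqnorm_poly d s ^ m)))"
proof -
  let ?K\<^sub>0 = "PConst (2 * (4 * real t) ^ m)" and ?c = "PConst (1 / real n)"
  let ?w = "Zp s i j" and ?N = "sqnorm_poly d s ^ m" and ?P = "\<lambda>r. inner_poly d r s"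
  let ?W = "\<lambda>r. Zp r i j * Zp s i j * (sqnorm_poly d r ^ m * sqnorm_poly d s ^ m)"
  \<comment> \<open>axiom (iv) at \<open>u = v\<^sub>s\<close>; it enters multiplied by \<open>w\<^sub>s\<^sup>2\<close>\<close>
  define q where "q = ?K\<^sub>0 * ?N - ?c * (\<Sum>r<n. ?P r ^ t)"
  have power_t: "(x ^ m)\<^sup>2 = x ^ t" for x :: mpoly
    unfolding t_eq power_mult[symmetric] by (simp add: mult.commute)
  have "finite S"
    using S finite_subset by blast
  then have split: "(\<Sum>r<n. ?w\<^sup>2 * ?P r ^ t)
      = (\<Sum>r\<in>S. ?w\<^sup>2 * ?P r ^ t) + (\<Sum>r\<in>{..<n} - S. (?w * ?P r ^ m)\<^sup>2)"
    using S by (simp add: sum.subset_diff[of S "{..<n}"] power_mult_distrib power_t)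
  have "?w\<^sup>2 * q = ?K\<^sub>0 * (?w\<^sup>2 * ?N) - ?c * (\<Sum>r<n. ?w\<^sup>2 * ?P r ^ t)"
    unfolding q_def by (simp add: sum_distrib_left algebra_simps)
  then have "?w\<^sup>2 * q = ?K\<^sub>0 * (?w\<^sup>2 * ?N) - ?c * ((\<Sum>r\<in>S. ?w\<^sup>2 * ?P r ^ t) + (\<Sum>r\<in>{..<n} - S. (?w * ?P r ^ m)\<^sup>2))"
    unfolding split .
  moreover have "(\<Sum>r\<in>S. Zp r i j * sqnorm_poly d r ^ m) * (?w * ?N) = (\<Sum>r\<in>S. ?W r)"
    unfolding sum_distrib_right by (rule sum.cong) (simp_all add: algebra_simps)
  ultimately have "?K\<^sub>0 * (?w * ?N) - ?c * ((\<Sum>r\<in>S. Zp r i j * sqnorm_poly d r ^ m) * (?w * ?N))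
      = ?w\<^sup>2 * q + ?c * ((\<Sum>r\<in>S. ?w\<^sup>2 * ?P r ^ t - ?W r) + (\<Sum>r\<in>{..<n} - S. (?w * ?P r ^ m)\<^sup>2))
        + (?K\<^sub>0 * ?N) * (?w - ?w\<^sup>2)"
    by (simp add: sum_subtractf algebra_simps)
  also have "sos_proof (B_ineq n d t) (B_eq n k d) (2 * t + 4) \<dots>"
  proof (intro sos_proof_add sos_proof_scale sos_proof_sum)
    have "tdeg q \<le> 2 * t"
      unfolding q_def by (rule order.trans, (rule tdeg_le_intros)+) (simp add: t_eq)
    then show "sos_proof (B_ineq n d t) (B_eq n k d) (2 * t + 4) (?w\<^sup>2 * q)"
      using B_ineq_instance_at_Vp tdeg_PVar_le[of "Zv s i j"] unfolding q_def
      by (intro sos_proof_square_mult_axiom) auto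
    show "sos_proof (B_ineq n d t) (B_eq n k d) (2 * t + 4) (?w\<^sup>2 * ?P r ^ t - ?W r)" if "r \<in> S" for r
      using that S s by (intro sos_proof_pair) auto
    show "sos_proof (B_ineq n d t) (B_eq n k d) (2 * t + 4) ((?w * ?P r ^ m)\<^sup>2)" for r
    proof (rule sos_proof_square)
      have "tdeg (?w * ?P r ^ m) \<le> t + 2"
        by (rule order.trans, (rule tdeg_le_intros)+) (simp add: t_eq)
      then show "2 * tdeg (?w * ?P r ^ m) \<le> 2 * t + 4"
        by simp
    qed
    have "tdeg (?K\<^sub>0 * ?N) \<le> t"
      by (rule order.trans, (rule tdeg_le_intros)+) (simp add: t_eq)
    then show "sos_proof (B_ineq n d t) (B_eq n k d) (2 * t + 4) (?K\<^sub>0 * ?N * (?w - ?w\<^sup>2))"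
      using S s by (intro sos_proof_ideal deg_ideal_idempotency_multiple) auto
  qed simp_all
  finally show ?thesis .
qed

lemma sos_proof_quadratic_bound:
  assumes "S \<subseteq> {..<n}"
  shows "sos_proof (B_ineq n d t) (B_eq n k d) (2 * t + 4)
    (PConst (2 * (4 * real t) ^ m) * (\<Sum>r\<in>S. Zp r i j * sqnorm_poly d r ^ m)
      - PConst (1 / real n) * (\<Sum>r\<in>S. Zp r i j * sqnorm_poly d r ^ m)\<^sup>2)"
proof -
  let ?x = "\<lambda>r. Zp r i j * sqnorm_poly d r ^ m"
  have "PConst (2 * (4 * real t) ^ m) * sum ?x S - PConst (1 / real n) * (sum ?x S)\<^sup>2
      = (\<Sum>s\<in>S. PConst (2 * (4 * real t) ^ m) * ?x s - PConst (1 / real n) * (sum ?x S * ?x s))"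
    by (simp add: power2_eq_square sum_subtractf sum_distrib_left)
  also have "sos_proof (B_ineq n d t) (B_eq n k d) (2 * t + 4) \<dots>"
    using assms by (intro sos_proof_sum sos_proof_row)
  finally show ?thesis .
qed

lemma sos_proof_average_bound:
  assumes "S \<subseteq> {..<n}" "0 < t" "0 < n" "0 < card S" "real n / real (card S) \<le> B"
  shows "sos_proof (B_ineq n d t) (B_eq n k d) (2 * t + 4)
    (PConst (B * (2 * (4 * real t) ^ m)) - PConst (1 / real (card S)) * (\<Sum>r\<in>S. Zp r i j * sqnorm_poly d r ^ m))"
proof (rule sos_proof_linear_bound_from_quadratic[OF sos_proof_quadratic_bound[OF assms(1)]])
  have "1 / real (card S) * (2 * (4 * real t) ^ m) / (1 / real n) = real n / real (card S) * (2 * (4 * real t) ^ m)"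
    by simp
  also have "\<dots> \<le> B * (2 * (4 * real t) ^ m)"
    using assms(5) by (rule mult_right_mono) simp
  finally show "1 / real (card S) * (2 * (4 * real t) ^ m) / (1 / real n) \<le> B * (2 * (4 * real t) ^ m)" .
  have "tdeg (\<Sum>r\<in>S. Zp r i j * sqnorm_poly d r ^ m) \<le> t + 2"
    by (rule order.trans, (rule tdeg_le_intros)+) (simp add: t_eq)
  then show "2 * tdeg (\<Sum>r\<in>S. Zp r i j * sqnorm_poly d r ^ m) \<le> 2 * t + 4"
    by simp
qed (use assms(2-4) in simp_all)

end

theorem lemma5p3:
  shows "\<exists>C::nat. \<forall>(t::nat) (n::nat) (k::nat) (d::nat) (c::nat) (S::nat set) (i::nat) (j::nat).
    even t \<longrightarrow> 0 < t \<longrightarrow> 0 < n \<longrightarrow> 0 < k \<longrightarrow>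
    S \<subseteq> {..<n} \<longrightarrow> real n / real k ^ c \<le> real (card S) \<longrightarrow> i < k \<longrightarrow> j < k \<longrightarrow>
    sos_derivable (B_ineq n d t) (B_eq n k d) (C * t)
      (PConst (2 * real k ^ c * (4 * real t) ^ (t div 2))
       - PConst (1 / real (card S)) * (\<Sum>r\<in>S. Zp r i j * (\<Sum>a<d. Vp r a ^ 2) ^ (t div 2)))"
proof (intro exI[of _ 5] allI impI)
  fix t n k d c i j :: nat and S :: "nat set"
  assume "even t" "0 < t" "0 < n" "0 < k" "S \<subseteq> {..<n}"
    and card: "real n / real k ^ c \<le> real (card S)" and ij: "i < k" "j < k"
  define m where "m = t div 2"
  have t_eq: "t = 2 * m"
    using \<open>even t\<close> unfolding m_def by simp
  have "0 < real n / real k ^ c"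
    using \<open>0 < n\<close> \<open>0 < k\<close> by simp
  with card have card_pos: "0 < card S"
    by linarith
  have "real n / real (card S) \<le> real k ^ c"
    using card card_pos \<open>0 < k\<close> by (simp add: divide_le_eq mult.commute)
  with card_pos have bound: "sos_proof (B_ineq n d t) (B_eq n k d) (2 * t + 4)
      (PConst (real k ^ c * (2 * (4 * real t) ^ m))
       - PConst (1 / real (card S)) * (\<Sum>r\<in>S. Zp r i j * sqnorm_poly d r ^ m))"
    using \<open>S \<subseteq> {..<n}\<close> \<open>0 < t\<close> \<open>0 < n\<close> by (intro sos_proof_average_bound[OF ij t_eq])
  have bound_constant: "2 * real k ^ c * (4 * real t) ^ (t div 2) = real k ^ c * (2 * (4 * real t) ^ m)"
    unfolding m_def by simp
  have "2 * t + 4 \<le> 5 * t"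
    using t_eq \<open>0 < t\<close> by simp
  then show "sos_derivable (B_ineq n d t) (B_eq n k d) (5 * t)
      (PConst (2 * real k ^ c * (4 * real t) ^ (t div 2))
       - PConst (1 / real (card S)) * (\<Sum>r\<in>S. Zp r i j * (\<Sum>a<d. Vp r a ^ 2) ^ (t div 2)))"
    unfolding bound_constant unfolding m_def[symmetric] by (intro sos_derivable_if_sos_proof sos_proof_mono[OF bound])
qed

end
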